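(* For every strategy profile $s$ with $S_0(s)\vee S_1(s)$: if $\mathsf{SAcBes}(s)$ then $\Downarrow(s)$.
   Context: Let $P=\{A,B\}$ and $\mathrm{Choice}=\{d,r\}$; a payoff function is $f:P\to\mathbb{R}$. Strategy profiles are elements of the final coalgebra of $X\mapsto\mathbb{R}^P+P\times\mathrm{Choice}\times X\times X$ (finite or infinite trees $\langle f\rangle$ or $\langle p,c,s_d,s_r\rangle$, equality being bisimilarity). Convergence $\downarrow$ is the least predicate with $\downarrow(s)$ iff $s=\langle f\rangle$, or $s=\langle p,d,s_d,s_r\rangle$ and $\downarrow(s_d)$, or $s=\langle p,r,s_d,s_r\rangle$ and $\downarrow(s_r)$. Strong convergence $\Downarrow$ is the greatest predicate with $\Downarrow(s)$ iff $s=\langle f\rangle$, or $s=\langle p,c,s_d,s_r\rangle$ with $\downarrow(s)$, $\Downarrow(s_d)$, $\Downarrow(s_r)$. For a predicate $\Phi$, $\Box\Phi$ is the greatest predicate such that $\Box\Phi(s)$ iff $\Phi(s)$ and, whenever $s=\langle p,c,s_d,s_r\rangle$, $\Box\Phi(s_d)$ and $\Box\Phi(s_r)$. Let $f_{0,1}=(A\mapsto0,B\mapsto1)$ and $f_{1,0}=(A\mapsto1,B\mapsto0)$. $S_0,S_1$ are the greatest predicates with $S_0(s)$ iff $s=\langle A,c,\langle f_{0,1}\rangle,s'\rangle$ with $S_1(s')$, and $S_1(s)$ iff $s=\langle B,c,\langle f_{1,0}\rangle,s'\rangle$ with $S_0(s')$. $\mathsf{AcBes}$ is the least predicate such that $\mathsf{AcBes}(s)$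 holds iff: whenever $s=\langle p,c,\langle f\rangle,s'\rangle$, then ($p=A$, $f=f_{0,1}$, $c=r$, $\mathsf{AcBes}(s')$) or ($p=B$, $f=f_{1,0}$, and ($c=d$ or $\mathsf{AcBes}(s')$)). Finally $\mathsf{SAcBes}=\Box\,\mathsf{AcBes}$. *)

theory Defs
  imports Main "HOL.Real"
begin

datatype agent = A | B
datatype choice = ChD | ChR   (* d = down, r = right *)

type_synonym payoff = "agent \<Rightarrow> real"

codatatype strat = Leaf payoff | Node agent choice strat strat

definition f01 :: payoff where "f01 = (\<lambda>p. case p of A \<Rightarrow> 0 | B \<Rightarrow> 1)"
definition f10 :: payoff where "f10 = (\<lambda>p. case p of A \<Rightarrow> 1 | B \<Rightarrow> 0)"

inductive conv :: "strat \<Rightarrow> bool" where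
  conv_leaf: "conv (Leaf f)"
| conv_d: "conv sd \<Longrightarrow> conv (Node p ChD sd sr)"
| conv_r: "conv sr \<Longrightarrow> conv (Node p ChR sd sr)"

coinductive sconv :: "strat \<Rightarrow> bool" where
  sconv_leaf: "sconv (Leaf f)"
| sconv_node: "conv (Node p c sd sr) \<Longrightarrow> sconv sd \<Longrightarrow> sconv sr \<Longrightarrow> sconv (Node p c sd sr)"

coinductive always :: "(strat \<Rightarrow> bool) \<Rightarrow> strat \<Rightarrow> bool" for \<Phi> where
  always_leaf: "\<Phi> (Leaf f) \<Longrightarrow> always \<Phi> (Leaf f)"
| always_node: "\<Phi> (Node p c sd sr) \<Longrightarrow> always \<Phi> sd \<Longrightarrow> always \<Phi> sr \<Longrightarrow> always \<Phi> (Node p c sd sr)"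

coinductive S0 :: "strat \<Rightarrow> bool" and S1 :: "strat \<Rightarrow> bool" where
  S0I: "S1 s' \<Longrightarrow> S0 (Node A c (Leaf f01) s')"
| S1I: "S0 s' \<Longrightarrow> S1 (Node B c (Leaf f10) s')"

inductive AcBes :: "strat \<Rightarrow> bool" where
  AcBesI: "(\<forall>p c f s'. s = Node p c (Leaf f) s' \<longrightarrow>
              (p = A \<and> f = f01 \<and> c = ChR \<and> AcBes s') \<or>
              (p = B \<and> f = f10 \<and> (c = ChD \<or> AcBes s'))) \<Longrightarrow> AcBes s"

definition SAcBes :: "strat \<Rightarrow> bool" where "SAcBes = always AcBes"

end

theory Submission
  imports Defs
begin

text \<open>Along the spine of an alternating profile every left subtree is a leaf, so AcBes forces
  convergence by induction on its derivation; strong convergence then follows coinductively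
  along the spine, since SAcBes holds at every node.\<close>

lemma always_here: "always \<Phi> s \<Longrightarrow> \<Phi> s"
  by (erule always.cases) auto

lemma always_Node_right: "always \<Phi> (Node p c sd sr) \<Longrightarrow> always \<Phi> sr"
  by (erule always.cases) auto

lemma S0_shape: "S0 s \<Longrightarrow> \<exists>c s'. s = Node A c (Leaf f01) s' \<and> S1 s'"
  by (cases rule: S0.cases) auto

lemma S1_shape: "S1 s \<Longrightarrow> \<exists>c s'. s = Node B c (Leaf f10) s' \<and> S0 s'"
  by (cases rule: S1.cases) auto

lemma AcBes_alternating_conv: "AcBes s \<Longrightarrow> S0 s \<or> S1 s \<Longrightarrow> conv s"
proof (induction rule: AcBes.induct)
  case (AcBesI s)
  from AcBesI.prems show ?case
  proof
    assume "S0 s"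
    then obtain c s' where s: "s = Node A c (Leaf f01) s'" and "S1 s'"
      using S0_shape by blast
    with AcBesI.IH have "c = ChR" "conv s'" by fastforce+
    with s show ?thesis by (simp add: conv_r)
  next
    assume "S1 s"
    then obtain c s' where s: "s = Node B c (Leaf f10) s'" and "S0 s'"
      using S1_shape by blast
    with AcBesI.IH have "c = ChD \<or> conv s'" by fastforce
    with s show ?thesis by (cases c) (auto intro: conv.intros)
  qed
qed

theorem mainTheorem8:
  fixes s :: strat
  assumes "S0 s \<or> S1 s"
    and "SAcBes s"
  shows "sconv s"
  using assms unfolding SAcBes_def
proof (coinduction arbitrary: s rule: sconv.coinduct)
  case (sconv s)
  then have "conv s"
    using AcBes_alternating_conv always_here by blast
  moreover from sconv(1) obtain p c f s' where s: "s = Node p c (Leaf f) s'" "S0 s' \<or> S1 s'"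
    using S0_shape S1_shape by blast
  moreover have "always AcBes s'"
    using sconv(2) s(1) always_Node_right by blast
  ultimately show ?case
    by (auto intro: sconv_leaf)
qed

end
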